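(* Let $G=(V,E,w)$ be a finite undirected graph with positive vertex weights and let $IS$ and $S$ be independent sets of $G$. (a) Suppose there is $I_w\in A_I$ with $IS\subseteq I_w$. If $IS'\subseteq N(IS)$ is an independent set with $w(IS')>w(IS\cap N(IS'))$, then there exists an independent set $IS''\subseteq N(IS')\setminus N[IS]$ such that $w(IS')\le w(IS\cap N(IS'))+w(IS'')$. Moreover, if there is exactly one independent set $IS''\subseteq N(IS')\setminus N[IS]$ satisfying this inequality, then $IS\cup IS''\subseteq I_w$. (b) Suppose $S$ is contained in every MWIS of $G$. Then for every nonempty independent set $S'\subseteq N(S)$ there is an independent set $S''\subseteq N(S')\setminus N[S]$ such that $w(S')<w(S\cap N(S'))+w(S'')$. Moreover, if there is exactly one independent set $S''\subseteq N(S')\setminus N[S]$ satisfying this strict inequality, then $S\cup S''$ is contained in every MWIS of $G$.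
   Context: $G=(V,E,w)$ is a finite simple undirected graph with $w:V\to\mathbb{R}^{+}$. For $S\subseteq V$, $w(S)=\sum_{v\in S}w(v)$ (so $w(\emptyset)=0$). Independent sets are sets of pairwise non-adjacent vertices; the empty set is independent. A MWIS is an independent set of maximum total weight; $A_I$ is the set of all MWISs. $N(S)=\big(\bigcup_{v\in S}N(v)\big)\setminus S$ and $N[S]=N(S)\cup S$. *)

theory Defs
  imports Main "HOL.Real"
begin

definition wgraph :: "'a set \<Rightarrow> ('a \<Rightarrow> 'a \<Rightarrow> bool) \<Rightarrow> ('a \<Rightarrow> real) \<Rightarrow> bool" where
  "wgraph V E w \<longleftrightarrow> finite V \<and> (\<forall>u v. E u v \<longrightarrow> u \<in> V \<and> v \<in> V)
     \<and> (\<forall>u v. E u v \<longrightarrow> E v u) \<and> (\<forall>v. \<not> E v v) \<and> (\<forall>v\<in>V. w v > 0)"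

definition weight :: "('a \<Rightarrow> real) \<Rightarrow> 'a set \<Rightarrow> real" where
  "weight w S = (\<Sum>v\<in>S. w v)"

definition indep :: "'a set \<Rightarrow> ('a \<Rightarrow> 'a \<Rightarrow> bool) \<Rightarrow> 'a set \<Rightarrow> bool" where
  "indep V E S \<longleftrightarrow> S \<subseteq> V \<and> (\<forall>u\<in>S. \<forall>v\<in>S. \<not> E u v)"

definition mwis :: "'a set \<Rightarrow> ('a \<Rightarrow> 'a \<Rightarrow> bool) \<Rightarrow> ('a \<Rightarrow> real) \<Rightarrow> 'a set \<Rightarrow> bool" where
  "mwis V E w I \<longleftrightarrow> indep V E I \<and> (\<forall>J. indep V E J \<longrightarrow> weight w J \<le> weight w I)"

definition nbhd :: "'a set \<Rightarrow> ('a \<Rightarrow> 'a \<Rightarrow> bool) \<Rightarrow> 'a set \<Rightarrow> 'a set" where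
  "nbhd V E S = {v \<in> V. \<exists>u\<in>S. E u v} - S"

definition cnbhd :: "'a set \<Rightarrow> ('a \<Rightarrow> 'a \<Rightarrow> bool) \<Rightarrow> 'a set \<Rightarrow> 'a set" where
  "cnbhd V E S = nbhd V E S \<union> S"

end

theory Submission
  imports Defs
begin

text \<open>Let \<open>I\<close> be a MWIS containing the independent set \<open>S\<close>, and let \<open>T \<subseteq> N(S)\<close> be independent.
  Swapping \<open>T\<close> into \<open>I\<close>, i.e. replacing \<open>I \<inter> N(T)\<close> by \<open>T\<close>, again gives an independent set. Since
  \<open>I\<close> avoids \<open>N(S)\<close>, the removed part \<open>I \<inter> N(T)\<close> splits into \<open>S \<inter> N(T)\<close> and \<open>I \<inter> N(T) - N[S]\<close>, so
  maximality of \<open>I\<close> yields \<open>w(T) \<le> w(S \<inter> N(T)) + w(I \<inter> N(T) - N[S])\<close>. If \<open>S\<close> lies in every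
  MWIS and \<open>T \<noteq> {}\<close>, the swapped set loses a vertex of \<open>S\<close>, so it is not a MWIS and the
  inequality is strict. In both cases \<open>I \<inter> N(T) - N[S]\<close> is an admissible \<open>S''\<close>; if the
  admissible set is unique, it is this one, and therefore lies in \<open>I\<close>.\<close>

lemma wgraph_finite_subset: "wgraph V E w \<Longrightarrow> X \<subseteq> V \<Longrightarrow> finite X"
  unfolding wgraph_def using finite_subset by blast

lemma indep_subset: "indep V E I \<Longrightarrow> J \<subseteq> I \<Longrightarrow> indep V E J"
  unfolding indep_def by blast

lemma indep_Int_nbhd_empty: "indep V E I \<Longrightarrow> S \<subseteq> I \<Longrightarrow> I \<inter> nbhd V E S = {}"
  unfolding indep_def nbhd_def by blast

lemma Int_nbhd_nonempty:
  assumes G: "wgraph V E w" and "T \<noteq> {}" and "T \<subseteq> nbhd V E S"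
  shows "S \<inter> nbhd V E T \<noteq> {}"
proof -
  obtain y where y: "y \<in> T" using \<open>T \<noteq> {}\<close> by blast
  then obtain x where x: "x \<in> S" "E x y" using \<open>T \<subseteq> nbhd V E S\<close> unfolding nbhd_def by blast
  have "x \<notin> T" using \<open>T \<subseteq> nbhd V E S\<close> x(1) unfolding nbhd_def by blast
  with x y G have "x \<in> nbhd V E T" unfolding nbhd_def wgraph_def by blast
  with x(1) show ?thesis by blast
qed

lemma mwis_exists:
  assumes G: "wgraph V E w"
  shows "\<exists>I. mwis V E w I"
proof -
  let ?A = "{J. indep V E J}"
  have "?A \<subseteq> Pow V" unfolding indep_def by blast
  with G have fin: "finite ?A" unfolding wgraph_def by (meson finite_Pow_iff finite_subset)
  have "{} \<in> ?A" unfolding indep_def by simp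
  with fin obtain I where "I \<in> ?A" "weight w I = Max (weight w ` ?A)"
    by (metis (no_types, lifting) Max_in empty_iff finite_imageI image_iff image_is_empty)
  with fin show ?thesis unfolding mwis_def by auto
qed

definition swap_in :: "'a set \<Rightarrow> ('a \<Rightarrow> 'a \<Rightarrow> bool) \<Rightarrow> 'a set \<Rightarrow> 'a set \<Rightarrow> 'a set" where
  "swap_in V E I T = (I - nbhd V E T) \<union> T"

lemma indep_swap_in:
  assumes G: "wgraph V E w" and I: "indep V E I" and T: "indep V E T"
  shows "indep V E (swap_in V E I T)"
  unfolding indep_def swap_in_def
proof (intro conjI ballI notI)
  show "I - nbhd V E T \<union> T \<subseteq> V" using I T unfolding indep_def by blast
next
  fix u v assume u: "u \<in> I - nbhd V E T \<union> T" and v: "v \<in> I - nbhd V E T \<union> T" and "E u v"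
  then have "E v u" "u \<in> V" "v \<in> V" using G unfolding wgraph_def by blast+
  with u v \<open>E u v\<close> I T show False unfolding indep_def nbhd_def by blast
qed

lemma weight_swap_in:
  assumes G: "wgraph V E w" and I: "indep V E I" and "S \<subseteq> I"
    and T: "indep V E T" and "T \<subseteq> nbhd V E S"
  shows "weight w (swap_in V E I T) =
    weight w I - (weight w (S \<inter> nbhd V E T) + weight w (I \<inter> nbhd V E T - cnbhd V E S)) + weight w T"
proof -
  have fin: "finite I" "finite T"
    using I T wgraph_finite_subset[OF G] unfolding indep_def by auto
  have IN: "I \<inter> nbhd V E S = {}" using indep_Int_nbhd_empty[OF I \<open>S \<subseteq> I\<close>] .
  with \<open>T \<subseteq> nbhd V E S\<close> have IT: "I \<inter> T = {}" by blast
  define R where "R = I \<inter> nbhd V E T - cnbhd V E S"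
  have split: "I \<inter> nbhd V E T = (S \<inter> nbhd V E T) \<union> R"
    using IN \<open>S \<subseteq> I\<close> unfolding R_def cnbhd_def by auto
  have lost: "weight w (I \<inter> nbhd V E T) = weight w (S \<inter> nbhd V E T) + weight w R"
    unfolding weight_def split
  proof (rule sum.union_disjoint)
    show "finite (S \<inter> nbhd V E T)" "finite R"
      using fin(1) \<open>S \<subseteq> I\<close> unfolding R_def by (auto intro: finite_subset)
    show "S \<inter> nbhd V E T \<inter> R = {}"
      unfolding R_def cnbhd_def by blast
  qed
  have "weight w I = weight w (I - nbhd V E T) + weight w (I \<inter> nbhd V E T)"
    unfolding weight_def using sum.Int_Diff[OF fin(1), of w "nbhd V E T"] by linarith
  moreover have "weight w (swap_in V E I T) = weight w (I - nbhd V E T) + weight w T"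
    unfolding weight_def swap_in_def using fin IT by (intro sum.union_disjoint) auto
  ultimately show ?thesis using lost unfolding R_def by linarith
qed

lemma mwis_swap_bound:
  assumes G: "wgraph V E w" and I: "mwis V E w I" and "S \<subseteq> I"
    and T: "indep V E T" and "T \<subseteq> nbhd V E S"
  shows "weight w T \<le> weight w (S \<inter> nbhd V E T) + weight w (I \<inter> nbhd V E T - cnbhd V E S)"
proof -
  have "indep V E I" using I unfolding mwis_def by blast
  then have "weight w (swap_in V E I T) \<le> weight w I"
    using I indep_swap_in[OF G _ T] unfolding mwis_def by blast
  with weight_swap_in[OF G \<open>indep V E I\<close> assms(3-5)] show ?thesis by linarith
qed

lemma mwis_swap_bound_strict:
  assumes G: "wgraph V E w" and common: "\<forall>J. mwis V E w J \<longrightarrow> S \<subseteq> J" and I: "mwis V E w I"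
    and T: "indep V E T" and "T \<noteq> {}" and "T \<subseteq> nbhd V E S"
  shows "weight w T < weight w (S \<inter> nbhd V E T) + weight w (I \<inter> nbhd V E T - cnbhd V E S)"
proof -
  have "indep V E I" and "S \<subseteq> I" using I common unfolding mwis_def by blast+
  obtain x where x: "x \<in> S" "x \<in> nbhd V E T"
    using Int_nbhd_nonempty[OF G \<open>T \<noteq> {}\<close> \<open>T \<subseteq> nbhd V E S\<close>] by blast
  with \<open>T \<subseteq> nbhd V E S\<close> have "x \<notin> swap_in V E I T"
    unfolding swap_in_def nbhd_def by blast
  with x common have "\<not> mwis V E w (swap_in V E I T)" by blast
  with indep_swap_in[OF G \<open>indep V E I\<close> T] obtain J
    where "indep V E J" "weight w (swap_in V E I T) < weight w J"
    unfolding mwis_def by force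
  with I have "weight w (swap_in V E I T) < weight w I"
    unfolding mwis_def by force
  with weight_swap_in[OF G \<open>indep V E I\<close> \<open>S \<subseteq> I\<close> T \<open>T \<subseteq> nbhd V E S\<close>] show ?thesis by linarith
qed

lemma indep_Int_nbhd_Diff_cnbhd:
  "indep V E I \<Longrightarrow> indep V E (I \<inter> nbhd V E T - cnbhd V E S)"
  by (rule indep_subset) auto

theorem theorem2p2:
  fixes V :: "'a set" and E :: "'a \<Rightarrow> 'a \<Rightarrow> bool" and w :: "'a \<Rightarrow> real"
    and IS S :: "'a set"
  assumes G: "wgraph V E w"
    and IS_ind: "indep V E IS" and S_ind: "indep V E S"
  shows
    "(\<forall>Iw. mwis V E w Iw \<and> IS \<subseteq> Iw \<longrightarrow>
       (\<forall>IS'. indep V E IS' \<and> IS' \<subseteq> nbhd V E IS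
              \<and> weight w IS' > weight w (IS \<inter> nbhd V E IS') \<longrightarrow>
          (\<exists>IS''. indep V E IS'' \<and> IS'' \<subseteq> nbhd V E IS' - cnbhd V E IS
                  \<and> weight w IS' \<le> weight w (IS \<inter> nbhd V E IS') + weight w IS'')
        \<and> (\<forall>IS''. (indep V E IS'' \<and> IS'' \<subseteq> nbhd V E IS' - cnbhd V E IS
                  \<and> weight w IS' \<le> weight w (IS \<inter> nbhd V E IS') + weight w IS'')
                 \<and> (\<forall>X. indep V E X \<and> X \<subseteq> nbhd V E IS' - cnbhd V E IS
                        \<and> weight w IS' \<le> weight w (IS \<inter> nbhd V E IS') + weight w X
                        \<longrightarrow> X = IS'')
                 \<longrightarrow> IS \<union> IS'' \<subseteq> Iw)))
   \<and>
    ((\<forall>I. mwis V E w I \<longrightarrow> S \<subseteq> I) \<longrightarrow>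
       (\<forall>S'. indep V E S' \<and> S' \<noteq> {} \<and> S' \<subseteq> nbhd V E S \<longrightarrow>
          (\<exists>S''. indep V E S'' \<and> S'' \<subseteq> nbhd V E S' - cnbhd V E S
                 \<and> weight w S' < weight w (S \<inter> nbhd V E S') + weight w S'')
        \<and> (\<forall>S''. (indep V E S'' \<and> S'' \<subseteq> nbhd V E S' - cnbhd V E S
                  \<and> weight w S' < weight w (S \<inter> nbhd V E S') + weight w S'')
                 \<and> (\<forall>X. indep V E X \<and> X \<subseteq> nbhd V E S' - cnbhd V E S
                        \<and> weight w S' < weight w (S \<inter> nbhd V E S') + weight w X
                        \<longrightarrow> X = S'')
                 \<longrightarrow> (\<forall>I. mwis V E w I \<longrightarrow> S \<union> S'' \<subseteq> I))))"
proof (intro conjI allI impI)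
  fix Iw IS' assume Iw: "mwis V E w Iw \<and> IS \<subseteq> Iw"
    and IS': "indep V E IS' \<and> IS' \<subseteq> nbhd V E IS \<and> weight w IS' > weight w (IS \<inter> nbhd V E IS')"
  let ?R = "Iw \<inter> nbhd V E IS' - cnbhd V E IS"
  have R: "indep V E ?R" "?R \<subseteq> nbhd V E IS' - cnbhd V E IS"
    "weight w IS' \<le> weight w (IS \<inter> nbhd V E IS') + weight w ?R"
    using Iw IS' indep_Int_nbhd_Diff_cnbhd[of V E Iw] mwis_swap_bound[OF G]
    unfolding mwis_def by auto
  then show "\<exists>IS''. indep V E IS'' \<and> IS'' \<subseteq> nbhd V E IS' - cnbhd V E IS
      \<and> weight w IS' \<le> weight w (IS \<inter> nbhd V E IS') + weight w IS''"
    by blast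
  fix IS'' assume "(indep V E IS'' \<and> IS'' \<subseteq> nbhd V E IS' - cnbhd V E IS
      \<and> weight w IS' \<le> weight w (IS \<inter> nbhd V E IS') + weight w IS'')
    \<and> (\<forall>X. indep V E X \<and> X \<subseteq> nbhd V E IS' - cnbhd V E IS
      \<and> weight w IS' \<le> weight w (IS \<inter> nbhd V E IS') + weight w X \<longrightarrow> X = IS'')"
  then have "?R = IS''" using R by blast
  with Iw show "IS \<union> IS'' \<subseteq> Iw" by blast
next
  fix S' assume common: "\<forall>I. mwis V E w I \<longrightarrow> S \<subseteq> I"
    and S': "indep V E S' \<and> S' \<noteq> {} \<and> S' \<subseteq> nbhd V E S"
  have R: "indep V E (I \<inter> nbhd V E S' - cnbhd V E S)"
    "I \<inter> nbhd V E S' - cnbhd V E S \<subseteq> nbhd V E S' - cnbhd V E S"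
    "weight w S' < weight w (S \<inter> nbhd V E S') + weight w (I \<inter> nbhd V E S' - cnbhd V E S)"
    if I: "mwis V E w I" for I
    using I S' indep_Int_nbhd_Diff_cnbhd[of V E I] mwis_swap_bound_strict[OF G common I]
    unfolding mwis_def by auto
  obtain I0 where "mwis V E w I0" using mwis_exists[OF G] by blast
  from R[OF this] show "\<exists>S''. indep V E S'' \<and> S'' \<subseteq> nbhd V E S' - cnbhd V E S
      \<and> weight w S' < weight w (S \<inter> nbhd V E S') + weight w S''" by blast
  fix S'' I assume "(indep V E S'' \<and> S'' \<subseteq> nbhd V E S' - cnbhd V E S
      \<and> weight w S' < weight w (S \<inter> nbhd V E S') + weight w S'')
    \<and> (\<forall>X. indep V E X \<and> X \<subseteq> nbhd V E S' - cnbhd V E S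
      \<and> weight w S' < weight w (S \<inter> nbhd V E S') + weight w X \<longrightarrow> X = S'')"
    and I: "mwis V E w I"
  then have "I \<inter> nbhd V E S' - cnbhd V E S = S''" using R[OF I] by blast
  with common I show "S \<union> S'' \<subseteq> I" by blast
qed

end
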